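(* Let $n,m\geq 1$ and let $(S_1,\dots,S_{n+m})$ be a random vector of real scores which is exchangeable (its distribution is invariant under any permutation of coordinates) and has almost surely no ties. Define the conformal $p$-values $$p_i=\frac{1}{n+1}\Big(1+\sum_{j=1}^n \mathbf{1}\{S_j\geq S_{n+i}\}\Big),\quad i\in\{1,\dots,m\}.$$ Then $(p_1,\dots,p_m)$ has joint distribution $P_{n,m}$; in particular this joint distribution does not depend on the specific distribution of the scores.
   Context: For a fixed $U=(U_1,\dots,U_n)\in[0,1]^n$ with order statistics $U_{(1)}\leq\dots\leq U_{(n)}$ and conventions $U_{(0)}=0$, $U_{(n+1)}=1$, $P^U$ is the distribution on $\{\ell/(n+1):\ell\in\{1,\dots,n+1\}\}$ with $P^U(\{\ell/(n+1)\})=U_{(\ell)}-U_{(\ell-1)}$. $P_{n,m}$ is the distribution on $[0,1]^m$ of $(q_1,\dots,q_m)$ generated as follows: $U_1,\dots,U_n$ i.i.d. $\mathrm{Unif}[0,1]$, and conditionally on $U=(U_1,\dots,U_n)$, $q_1,\dots,q_m$ i.i.d. with distribution $P^U$. *)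

theory Defs
  imports "HOL-Probability.Probability"
begin

definition ord_stat :: "nat \<Rightarrow> (nat \<Rightarrow> real) \<Rightarrow> nat \<Rightarrow> real" where
  "ord_stat n U l = (if l = 0 then 0 else if l \<ge> n + 1 then 1
                     else sort (map U [0..<n]) ! (l - 1))"

definition PU :: "nat \<Rightarrow> (nat \<Rightarrow> real) \<Rightarrow> real measure" where
  "PU n U = measure_of UNIV (sets borel)
     (\<lambda>A. \<Sum>l\<in>{1..n+1}. ennreal (ord_stat n U l - ord_stat n U (l - 1))
                          * indicator A (real l / real (n + 1)))"

definition P_nm :: "nat \<Rightarrow> nat \<Rightarrow> (nat \<Rightarrow> real) measure" where
  "P_nm n m = (PiM {..<n} (\<lambda>_. uniform_measure lborel {0..1::real}))
                \<bind> (\<lambda>U. PiM {..<m} (\<lambda>_. PU n U))"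

text \<open>Conformal p-values (0-based: calibration scores S_0..S_{n-1}, test scores S_n..S_{n+m-1}).\<close>
definition conf_pval :: "nat \<Rightarrow> (nat \<Rightarrow> real) \<Rightarrow> nat \<Rightarrow> real" where
  "conf_pval n s i = (1 + real (card {j. j < n \<and> s j \<ge> s (n + i)})) / real (n + 1)"

end

theory Submission
  imports Defs
begin

(*
  Without ties, the scores determine a rank permutation of {..<n+m}, and the conformal
  p-values are a function of it alone. Exchangeability makes the rank permutation uniformly
  distributed over all (n+m)! permutations, so the law of the p-values is the same for every
  exchangeable tie-free score vector. It therefore suffices to compute it for i.i.d. uniform
  scores S_k = -U_k. Given the calibration sample U, the test points are again i.i.d. uniform,
  and p_i = l/(n+1) exactly when the i-th test point lies between the (l-1)-th and the l-th
  order statistic of U, which has probability U_(l) - U_(l-1).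
*)

section \<open>Ranks\<close>

(* Outside {..<N} the rank is the identity, so that for tie-free x it is a permutation in the
   sense of permutes. *)
definition rank :: "nat \<Rightarrow> (nat \<Rightarrow> 'a::linorder) \<Rightarrow> nat \<Rightarrow> nat" where
  "rank N x i = (if i < N then card {j. j < N \<and> x j < x i} else i)"

lemma rank_cong: "(\<And>i. i < N \<Longrightarrow> x i = y i) \<Longrightarrow> rank N x = rank N y"
  unfolding rank_def by (intro ext if_cong refl arg_cong[where f=card]) auto

lemma rank_less: "i < N \<Longrightarrow> rank N x i < N"
proof -
  assume i: "i < N"
  have "{j. j < N \<and> x j < x i} \<subset> {..<N}" using i by auto
  then have "card {j. j < N \<and> x j < x i} < card {..<N}" by (intro psubset_card_mono) auto
  then show ?thesis using i by (simp add: rank_def)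
qed

lemma rank_less_rank:
  assumes "i < N" "j < N" "x i < x j"
  shows "rank N x i < rank N x j"
proof -
  have "{k. k < N \<and> x k < x i} \<subset> {k. k < N \<and> x k < x j}"
    using assms by auto
  then have "card {k. k < N \<and> x k < x i} < card {k. k < N \<and> x k < x j}"
    by (intro psubset_card_mono) auto
  then show ?thesis using assms by (simp add: rank_def)
qed

lemma rank_less_rank_iff:
  assumes "inj_on x {..<N}" "i < N" "j < N"
  shows "rank N x i < rank N x j \<longleftrightarrow> x i < x j"
  using assms rank_less_rank[of i N j x] rank_less_rank[of j N i x]
  by (cases "x i < x j"; cases "x j < x i") (auto dest: inj_onD)

lemma rank_permutes:
  assumes "inj_on x {..<N}"
  shows "rank N x permutes {..<N}"
proof -
  have "inj_on (rank N x) {..<N}"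
  proof (rule inj_onI)
    fix i j assume ij: "i \<in> {..<N}" "j \<in> {..<N}" "rank N x i = rank N x j"
    then have "x i = x j" using rank_less_rank_iff[OF assms, of i j] rank_less_rank_iff[OF assms, of j i]
      by (auto simp: less_le_not_le)
    then show "i = j" using ij assms by (auto dest: inj_onD)
  qed
  moreover have "rank N x ` {..<N} \<subseteq> {..<N}" using rank_less by auto
  ultimately have "rank N x ` {..<N} = {..<N}"
    by (intro card_subset_eq) (auto simp: card_image)
  with \<open>inj_on (rank N x) {..<N}\<close> have "bij_betw (rank N x) {..<N} {..<N}"
    by (simp add: bij_betw_def)
  then show ?thesis by (rule bij_imp_permutes) (simp add: rank_def)
qed

lemma inj_on_if_rank_permutes:
  assumes "rank N x permutes {..<N}"
  shows "inj_on x {..<N}"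
proof (rule inj_onI)
  fix i j assume "i \<in> {..<N}" "j \<in> {..<N}" "x i = x j"
  then have "rank N x i = rank N x j" by (simp add: rank_def)
  then show "i = j" using permutes_inj[OF assms] by (auto dest: injD)
qed

lemma rank_permutation:
  assumes "\<pi> permutes {..<N}"
  shows "rank N \<pi> = \<pi>"
proof
  fix i show "rank N \<pi> i = \<pi> i"
  proof (cases "i < N")
    case True
    have "\<pi> ` {j. j < N \<and> \<pi> j < \<pi> i} = {..<\<pi> i}"
    proof -
      have "\<pi> ` {j. j < N \<and> \<pi> j < \<pi> i} = {k \<in> \<pi> ` {..<N}. k < \<pi> i}" by auto
      also have "\<dots> = {..<\<pi> i}"
        using permutes_image[OF assms] permutes_in_image[OF assms, of i] True by auto
      finally show ?thesis .
    qed
    moreover have "inj_on \<pi> {j. j < N \<and> \<pi> j < \<pi> i}"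
      using permutes_inj[OF assms] by (rule inj_on_subset) simp
    ultimately have "card {j. j < N \<and> \<pi> j < \<pi> i} = \<pi> i"
      using card_image by fastforce
    then show ?thesis using True by (simp add: rank_def)
  next
    case False
    then show ?thesis using assms by (simp add: rank_def permutes_def)
  qed
qed

lemma rank_eq_permutation_iff:
  assumes "\<pi> permutes {..<N}"
  shows "rank N x = \<pi> \<longleftrightarrow> (\<forall>i<N. \<forall>j<N. x i < x j \<longleftrightarrow> \<pi> i < \<pi> j)"
proof
  assume "rank N x = \<pi>"
  then have "inj_on x {..<N}" using assms inj_on_if_rank_permutes by blast
  then show "\<forall>i<N. \<forall>j<N. x i < x j \<longleftrightarrow> \<pi> i < \<pi> j"
    using rank_less_rank_iff \<open>rank N x = \<pi>\<close> by blast
next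
  assume "\<forall>i<N. \<forall>j<N. x i < x j \<longleftrightarrow> \<pi> i < \<pi> j"
  then have "{j. j < N \<and> x j < x i} = {j. j < N \<and> \<pi> j < \<pi> i}" if "i < N" for i
    using that by auto
  then have "rank N x = rank N \<pi>"
    by (simp add: rank_def fun_eq_iff)
  then show "rank N x = \<pi>" using rank_permutation[OF assms] by simp
qed

lemma rank_permute:
  assumes "\<sigma> permutes {..<N}"
  shows "rank N (\<lambda>i. x (\<sigma> i)) = rank N x \<circ> \<sigma>"
proof
  fix i show "rank N (\<lambda>i. x (\<sigma> i)) i = (rank N x \<circ> \<sigma>) i"
  proof (cases "i < N")
    case True
    have "\<sigma> ` {j. j < N \<and> x (\<sigma> j) < x (\<sigma> i)} = {k. k < N \<and> x k < x (\<sigma> i)}"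
    proof -
      have "\<sigma> ` {j. j < N \<and> x (\<sigma> j) < x (\<sigma> i)} = {k \<in> \<sigma> ` {..<N}. x k < x (\<sigma> i)}" by auto
      then show ?thesis using permutes_image[OF assms] by auto
    qed
    moreover have "inj_on \<sigma> {j. j < N \<and> x (\<sigma> j) < x (\<sigma> i)}"
      using permutes_inj[OF assms] by (rule inj_on_subset) simp
    moreover have "\<sigma> i < N" using permutes_in_image[OF assms] True by simp
    ultimately show ?thesis using True card_image by (fastforce simp: rank_def)
  next
    case False
    then show ?thesis using assms by (simp add: rank_def permutes_def)
  qed
qed

section \<open>Exchangeable scores\<close>

definition exchangeable :: "'w measure \<Rightarrow> nat \<Rightarrow> (nat \<Rightarrow> 'w \<Rightarrow> real) \<Rightarrow> bool" where
  "exchangeable M N S \<longleftrightarrow> (\<forall>\<sigma>. \<sigma> permutes {..<N} \<longrightarrow>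
     distr M (PiM {..<N} (\<lambda>_. borel)) (\<lambda>\<omega>. \<lambda>i\<in>{..<N}. S (\<sigma> i) \<omega>)
   = distr M (PiM {..<N} (\<lambda>_. borel)) (\<lambda>\<omega>. \<lambda>i\<in>{..<N}. S i \<omega>))"

lemma sets_rank_eq:
  assumes "\<pi> permutes {..<N}"
  shows "{x \<in> space (PiM {..<N} (\<lambda>_. borel)). rank N x = \<pi>} \<in> sets (PiM {..<N} (\<lambda>_. borel :: real measure))"
  unfolding rank_eq_permutation_iff[OF assms] by measurable

lemma emeasure_rank_eq_permute:
  assumes meas: "\<And>i. i < N \<Longrightarrow> S i \<in> borel_measurable M"
    and exch: "exchangeable M N S"
    and \<pi>: "\<pi> permutes {..<N}" and \<sigma>: "\<sigma> permutes {..<N}"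
  shows "emeasure M {\<omega> \<in> space M. rank N (\<lambda>i. S i \<omega>) = \<pi> \<circ> \<sigma>}
       = emeasure M {\<omega> \<in> space M. rank N (\<lambda>i. S i \<omega>) = \<pi>}"
proof -
  let ?PB = "PiM {..<N} (\<lambda>_. borel :: real measure)"
  let ?R = "{x \<in> space ?PB. rank N x = \<pi> \<circ> \<sigma>}"
  define X where "X = (\<lambda>\<omega>. \<lambda>i\<in>{..<N}. S i \<omega>)"
  define Y where "Y = (\<lambda>\<omega>. \<lambda>i\<in>{..<N}. S (\<sigma> i) \<omega>)"
  have \<sigma>_less: "\<sigma> i < N \<longleftrightarrow> i < N" for i
    using permutes_in_image[OF \<sigma>] by simp
  have X: "X \<in> measurable M ?PB" and Y: "Y \<in> measurable M ?PB"
    unfolding X_def Y_def using meas \<sigma>_less by (auto intro!: measurable_restrict)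
  have R: "?R \<in> sets ?PB"
    using sets_rank_eq permutes_compose[OF \<sigma> \<pi>] by blast
  have "rank N (Y \<omega>) = \<pi> \<circ> \<sigma> \<longleftrightarrow> rank N (\<lambda>i. S i \<omega>) = \<pi>" for \<omega>
  proof -
    have "rank N (Y \<omega>) = rank N (\<lambda>i. S i \<omega>) \<circ> \<sigma>"
      using rank_cong[of N "Y \<omega>" "\<lambda>i. S (\<sigma> i) \<omega>"] rank_permute[OF \<sigma>] by (simp add: Y_def)
    moreover have "f \<circ> \<sigma> = \<pi> \<circ> \<sigma> \<longleftrightarrow> f = \<pi>" for f :: "nat \<Rightarrow> nat"
      using permutes_surj[OF \<sigma>] by (auto simp: fun_eq_iff surj_def) metis
    ultimately show ?thesis by simp
  qed
  then have "{\<omega> \<in> space M. rank N (\<lambda>i. S i \<omega>) = \<pi>} = Y -` ?R \<inter> space M"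
    using measurable_space[OF Y] by auto
  moreover have "{\<omega> \<in> space M. rank N (\<lambda>i. S i \<omega>) = \<pi> \<circ> \<sigma>} = X -` ?R \<inter> space M"
    using measurable_space[OF X] rank_cong[of N "X _" "\<lambda>i. S i _"] by (auto simp: X_def)
  moreover have "distr M ?PB Y = distr M ?PB X"
    using exch \<sigma> by (simp add: exchangeable_def X_def Y_def)
  ultimately show ?thesis
    using emeasure_distr[OF X R] emeasure_distr[OF Y R] by simp
qed

lemma sets_rank_eq_event:
  fixes S :: "nat \<Rightarrow> 'w \<Rightarrow> real"
  assumes meas: "\<And>i. i < N \<Longrightarrow> S i \<in> borel_measurable M"
    and \<pi>: "\<pi> permutes {..<N}"
  shows "{\<omega> \<in> space M. rank N (\<lambda>i. S i \<omega>) = \<pi>} \<in> sets M"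
proof -
  define X where "X = (\<lambda>\<omega>. \<lambda>i\<in>{..<N}. S i \<omega>)"
  have X: "X \<in> measurable M (PiM {..<N} (\<lambda>_. borel))"
    using meas by (auto simp: X_def intro!: measurable_restrict)
  have eq: "{\<omega> \<in> space M. rank N (\<lambda>i. S i \<omega>) = \<pi>}
      = X -` {x \<in> space (PiM {..<N} (\<lambda>_. borel)). rank N x = \<pi>} \<inter> space M"
    using measurable_space[OF X] rank_cong[of N "X _" "\<lambda>i. S i _"] by (auto simp: X_def)
  show ?thesis
    unfolding eq using X sets_rank_eq[OF \<pi>] by (rule measurable_sets)
qed

lemma prob_rank_eq:
  assumes "prob_space M"
    and meas: "\<And>i. i < N \<Longrightarrow> S i \<in> borel_measurable M"
    and exch: "exchangeable M N S"
    and no_ties: "AE \<omega> in M. inj_on (\<lambda>i. S i \<omega>) {..<N}"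
    and \<pi>: "\<pi> permutes {..<N}"
  shows "measure M {\<omega> \<in> space M. rank N (\<lambda>i. S i \<omega>) = \<pi>} = 1 / fact N"
proof -
  interpret prob_space M by fact
  define E where "E \<pi> = {\<omega> \<in> space M. rank N (\<lambda>i. S i \<omega>) = \<pi>}" for \<pi>
  define P where "P = {\<pi>. \<pi> permutes {..<N}}"
  have E_sets: "E \<pi> \<in> sets M" if "\<pi> \<in> P" for \<pi>
    using sets_rank_eq_event[OF meas] that by (simp add: E_def P_def)
  have E_eq: "measure M (E \<pi>) = measure M (E id)" if "\<pi> \<in> P" for \<pi>
    using emeasure_rank_eq_permute[OF meas exch permutes_id, of \<pi>] that
    by (simp add: E_def P_def measure_def)
  have "(\<Union>\<pi>\<in>P. E \<pi>) = {\<omega> \<in> space M. inj_on (\<lambda>i. S i \<omega>) {..<N}}"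
    by (auto simp: E_def P_def intro: rank_permutes inj_on_if_rank_permutes)
  moreover have "(\<Union>\<pi>\<in>P. E \<pi>) \<in> events"
    using E_sets by (auto simp: P_def finite_permutations)
  ultimately have "measure M (\<Union>\<pi>\<in>P. E \<pi>) = 1"
    using no_ties by (simp add: prob_Collect_eq_1)
  moreover have "measure M (\<Union>\<pi>\<in>P. E \<pi>) = (\<Sum>\<pi>\<in>P. measure M (E \<pi>))"
    using E_sets by (intro finite_measure_finite_Union) (auto simp: P_def E_def disjoint_family_on_def finite_permutations)
  moreover have "card P = fact N"
    using card_permutations[of "{..<N}" N] by (simp add: P_def)
  ultimately have "fact N * measure M (E id) = 1"
    using E_eq by simp
  then show ?thesis
    using E_eq[of \<pi>] \<pi> by (simp add: E_def P_def field_simps)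
qed

lemma measure_distr_rank_statistic:
  assumes "prob_space M"
    and meas: "\<And>i. i < N \<Longrightarrow> S i \<in> borel_measurable M"
    and exch: "exchangeable M N S"
    and no_ties: "AE \<omega> in M. inj_on (\<lambda>i. S i \<omega>) {..<N}"
    and F: "F \<in> measurable M K"
    and F_rank: "AE \<omega> in M. F \<omega> = h (rank N (\<lambda>i. S i \<omega>))"
    and B: "B \<in> sets K"
  shows "measure (distr M K F) B = card {\<pi>. \<pi> permutes {..<N} \<and> h \<pi> \<in> B} / fact N"
proof -
  interpret prob_space M by fact
  define E where "E \<pi> = {\<omega> \<in> space M. rank N (\<lambda>i. S i \<omega>) = \<pi>}" for \<pi>
  define Q where "Q = {\<pi>. \<pi> permutes {..<N} \<and> h \<pi> \<in> B}"
  have Q: "finite Q" "\<And>\<pi>. \<pi> \<in> Q \<Longrightarrow> \<pi> permutes {..<N}"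
    using finite_permutations[of "{..<N}"] by (auto simp: Q_def elim: finite_subset[rotated])
  have E_sets: "E \<pi> \<in> events" if "\<pi> \<in> Q" for \<pi>
    using sets_rank_eq_event[OF meas Q(2)[OF that]] by (simp add: E_def)
  have "measure (distr M K F) B = prob (F -` B \<inter> space M)"
    by (rule measure_distr[OF F B])
  also have "\<dots> = prob (\<Union>\<pi>\<in>Q. E \<pi>)"
  proof (rule measure_eq_AE)
    show "AE \<omega> in M. \<omega> \<in> F -` B \<inter> space M \<longleftrightarrow> \<omega> \<in> (\<Union>\<pi>\<in>Q. E \<pi>)"
      using no_ties F_rank
      by eventually_elim (auto simp: Q_def E_def intro: rank_permutes)
  qed (use measurable_sets[OF F B] E_sets Q in auto)
  also have "\<dots> = (\<Sum>\<pi>\<in>Q. prob (E \<pi>))"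
    using E_sets Q by (intro finite_measure_finite_Union) (auto simp: E_def disjoint_family_on_def)
  also have "\<dots> = card Q / fact N"
    using prob_rank_eq[OF \<open>prob_space M\<close> meas exch no_ties Q(2)] by (simp add: E_def)
  finally show ?thesis by (simp add: Q_def)
qed

lemma conf_pval_rank:
  assumes "inj_on s {..<n + m}" "i < m"
  shows "conf_pval n s i = conf_pval n (\<lambda>k. real (rank (n + m) s k)) i"
proof -
  have "{j. j < n \<and> s (n + i) \<le> s j} = {j. j < n \<and> rank (n + m) s (n + i) \<le> rank (n + m) s j}"
    using rank_less_rank_iff[OF assms(1), of _ "n + i"] assms(2) by (auto simp: not_less[symmetric])
  then show ?thesis by (simp add: conf_pval_def)
qed

lemma real_card_Collect_eq_sum:
  fixes n :: nat
  shows "real (card {j. j < n \<and> P j}) = (\<Sum>j<n. if P j then 1 else 0)"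
proof -
  have "{j. j < n \<and> P j} = {j \<in> {..<n}. P j}" by auto
  then show ?thesis by (simp add: sum.If_cases Int_def)
qed

lemma measurable_conf_pvals:
  fixes S :: "nat \<Rightarrow> 'w \<Rightarrow> real"
  assumes "\<And>k. k < n + m \<Longrightarrow> S k \<in> borel_measurable M"
  shows "(\<lambda>\<omega>. \<lambda>i\<in>{..<m}. conf_pval n (\<lambda>k. S k \<omega>) i) \<in> measurable M (PiM {..<m} (\<lambda>_. borel))"
proof (rule measurable_restrict)
  fix i assume "i \<in> {..<m}"
  then have [measurable]: "S k \<in> borel_measurable M" if "k \<in> insert (n + i) {..<n}" for k
    using assms that by auto
  show "(\<lambda>\<omega>. conf_pval n (\<lambda>k. S k \<omega>) i) \<in> borel_measurable M"
    unfolding conf_pval_def real_card_Collect_eq_sum by measurable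
qed

lemma distr_conf_pvals_eq:
  fixes S :: "nat \<Rightarrow> 'w \<Rightarrow> real" and S' :: "nat \<Rightarrow> 'v \<Rightarrow> real"
  assumes "prob_space M" "prob_space M'"
    and meas: "\<And>i. i < n + m \<Longrightarrow> S i \<in> borel_measurable M"
    and meas': "\<And>i. i < n + m \<Longrightarrow> S' i \<in> borel_measurable M'"
    and "exchangeable M (n + m) S" "exchangeable M' (n + m) S'"
    and no_ties: "AE \<omega> in M. inj_on (\<lambda>i. S i \<omega>) {..<n + m}"
    and no_ties': "AE \<omega> in M'. inj_on (\<lambda>i. S' i \<omega>) {..<n + m}"
  shows "distr M (PiM {..<m} (\<lambda>_. borel)) (\<lambda>\<omega>. \<lambda>i\<in>{..<m}. conf_pval n (\<lambda>k. S k \<omega>) i)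
       = distr M' (PiM {..<m} (\<lambda>_. borel)) (\<lambda>\<omega>. \<lambda>i\<in>{..<m}. conf_pval n (\<lambda>k. S' k \<omega>) i)"
    (is "distr M ?K ?F = distr M' ?K ?F'")
proof (rule measure_eqI)
  define h where "h \<pi> = (\<lambda>i\<in>{..<m}. conf_pval n (\<lambda>k. real (\<pi> k)) i)" for \<pi> :: "nat \<Rightarrow> nat"
  fix B assume "B \<in> sets (distr M ?K ?F)"
  then have B: "B \<in> sets ?K" by simp
  have "AE \<omega> in M. ?F \<omega> = h (rank (n + m) (\<lambda>i. S i \<omega>))"
    using no_ties by eventually_elim (auto simp: h_def conf_pval_rank)
  from measure_distr_rank_statistic[OF assms(1) meas assms(5) no_ties measurable_conf_pvals[OF meas] this B]
  have "measure (distr M ?K ?F) B = card {\<pi>. \<pi> permutes {..<n + m} \<and> h \<pi> \<in> B} / fact (n + m)" .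
  moreover have "AE \<omega> in M'. ?F' \<omega> = h (rank (n + m) (\<lambda>i. S' i \<omega>))"
    using no_ties' by eventually_elim (auto simp: h_def conf_pval_rank)
  from measure_distr_rank_statistic[OF assms(2) meas' assms(6) no_ties' measurable_conf_pvals[OF meas'] this B]
  have "measure (distr M' ?K ?F') B = card {\<pi>. \<pi> permutes {..<n + m} \<and> h \<pi> \<in> B} / fact (n + m)" .
  moreover have "prob_space (distr M ?K ?F)" "prob_space (distr M' ?K ?F')"
    using assms measurable_conf_pvals[OF meas] measurable_conf_pvals[OF meas']
    by (auto intro: prob_space.prob_space_distr)
  ultimately show "emeasure (distr M ?K ?F) B = emeasure (distr M' ?K ?F') B"
    by (simp add: finite_measure.emeasure_eq_measure prob_space.finite_measure)
qed simp

section \<open>I.i.d. scores\<close>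

lemma exchangeable_PiM_iid:
  assumes "prob_space N" and f: "f \<in> borel_measurable N"
  shows "exchangeable (PiM {..<K} (\<lambda>_. N)) K (\<lambda>k x. f (x k))"
  unfolding exchangeable_def
proof (intro allI impI)
  fix \<sigma> assume \<sigma>: "\<sigma> permutes {..<K}"
  let ?P = "PiM {..<K} (\<lambda>_. N)" and ?PB = "PiM {..<K} (\<lambda>_. borel :: real measure)"
  define R where "R x = (\<lambda>i\<in>{..<K}. x (\<sigma> i))" for x :: "nat \<Rightarrow> 'a"
  have \<sigma>_less: "\<sigma> i < K \<longleftrightarrow> i < K" for i
    using permutes_in_image[OF \<sigma>] by simp
  have R: "R \<in> measurable ?P ?P"
    unfolding R_def using \<sigma>_less by (auto intro!: measurable_restrict measurable_component_singleton)
  have "distr ?P ?P R = ?P"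
    unfolding R_def using distr_PiM_reindex[of "{..<K}" "\<lambda>_. N" \<sigma> "{..<K}"] assms(1)
      permutes_inj_on[OF \<sigma>] \<sigma>_less by auto
  moreover have "(\<lambda>x. \<lambda>i\<in>{..<K}. f (x i)) \<in> measurable ?P ?PB"
    using f by (auto intro!: measurable_restrict)
  ultimately have "distr ?P ?PB (\<lambda>x. \<lambda>i\<in>{..<K}. f (R x i)) = distr ?P ?PB (\<lambda>x. \<lambda>i\<in>{..<K}. f (x i))"
    using distr_distr[OF _ R, of "\<lambda>x. \<lambda>i\<in>{..<K}. f (x i)" ?PB] by (simp add: comp_def)
  moreover have "(\<lambda>x. \<lambda>i\<in>{..<K}. f (R x i)) = (\<lambda>x. \<lambda>i\<in>{..<K}. f (x (\<sigma> i)))"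
    by (auto simp: R_def fun_eq_iff)
  ultimately show "distr ?P ?PB (\<lambda>x. \<lambda>i\<in>{..<K}. f (x (\<sigma> i))) = distr ?P ?PB (\<lambda>x. \<lambda>i\<in>{..<K}. f (x i))"
    by simp
qed

lemma AE_PiM_neq:
  fixes N :: "'a::{second_countable_topology, linorder_topology} measure"
  assumes "prob_space N" "sets N = sets borel" and diffuse: "\<And>c. AE y in N. y \<noteq> c"
    and "i \<in> I" "j \<in> I" "i \<noteq> j"
  shows "AE x in PiM I (\<lambda>_. N). x i \<noteq> x j"
proof -
  let ?P = "PiM (I - {i}) (\<lambda>_. N)"
  interpret pair_sigma_finite N ?P
    using assms(1) by (simp add: pair_sigma_finite_def prob_space_imp_sigma_finite prob_space_PiM)
  have I: "insert i (I - {i}) = I" using assms by auto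
  have "(\<lambda>(X, y). X(i := y)) \<circ> (\<lambda>(y, X). (X, y)) \<in> measurable (N \<Otimes>\<^sub>M ?P) (PiM I (\<lambda>_. N))"
    using measurable_comp[OF measurable_pair_swap' measurable_add_dim[of i "I - {i}" "\<lambda>_. N"]] unfolding I .
  then have add_i: "(\<lambda>(y, X). X(i := y)) \<in> measurable (N \<Otimes>\<^sub>M ?P) (PiM I (\<lambda>_. N))"
    by (simp add: comp_def case_prod_beta')
  have "(\<lambda>X. X j) \<in> measurable ?P N"
    by (rule measurable_component_singleton) (use assms in auto)
  then have [measurable]: "(\<lambda>X. X j) \<in> borel_measurable ?P"
    by (simp add: measurable_cong_sets[OF refl assms(2)])
  have "AE X in ?P. y \<noteq> X j" for y
    using AE_PiM_component[of "I - {i}" "\<lambda>_. N" j "\<lambda>z. y \<noteq> z"] diffuse[of y] assms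
    by (auto simp: eq_commute)
  then have "AE y in N. AE X in ?P. y \<noteq> X j"
    by (rule AE_I2)
  moreover have [measurable]: "fst \<in> borel_measurable (N \<Otimes>\<^sub>M ?P)"
    using measurable_fst[of N ?P] by (simp add: measurable_cong_sets[OF refl assms(2)])
  ultimately have "AE p in N \<Otimes>\<^sub>M ?P. fst p \<noteq> snd p j"
    by (intro AE_pair_measure) simp_all
  moreover have [measurable]: "(\<lambda>x. x k) \<in> borel_measurable (PiM I (\<lambda>_. N))" if "k \<in> I" for k
    using measurable_component_singleton[OF that, of "\<lambda>_. N"]
    by (simp add: measurable_cong_sets[OF refl assms(2)])
  then have "{x \<in> space (PiM I (\<lambda>_. N)). x i \<noteq> x j} \<in> sets (PiM I (\<lambda>_. N))"
    using assms by (intro borel_measurable_neq) auto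
  ultimately have "AE x in distr (N \<Otimes>\<^sub>M ?P) (PiM I (\<lambda>_. N)) (\<lambda>(y, X). X(i := y)). x i \<noteq> x j"
    using assms by (subst AE_distr_iff[OF add_i]) (auto split: prod.splits)
  also have "distr (N \<Otimes>\<^sub>M ?P) (PiM I (\<lambda>_. N)) (\<lambda>(y, X). X(i := y)) = PiM I (\<lambda>_. N)"
    using distr_pair_PiM_eq_PiM[of "I - {i}" "\<lambda>_. N" i] assms(1) unfolding I by simp
  finally show ?thesis .
qed

lemma AE_PiM_inj_on:
  fixes N :: "'a::{second_countable_topology, linorder_topology} measure"
  assumes "prob_space N" "sets N = sets borel" "\<And>c. AE y in N. y \<noteq> c" "finite I"
  shows "AE x in PiM I (\<lambda>_. N). inj_on x I"
proof -
  have "AE x in PiM I (\<lambda>_. N). \<forall>i\<in>I. \<forall>j\<in>I. i \<noteq> j \<longrightarrow> x i \<noteq> x j"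
    using assms by (intro AE_finite_allI) (auto intro: AE_PiM_neq)
  then show ?thesis
    by eventually_elim (auto simp: inj_on_def)
qed

abbreviation unif01 :: "real measure" where
  "unif01 \<equiv> uniform_measure lborel {0..1}"

lemma prob_space_unif01: "prob_space unif01"
  by (rule prob_space_uniform_measure) auto

lemma AE_unif01_neq: "AE y in unif01. y \<noteq> c"
  by (intro AE_uniform_measureI) (auto intro: AE_mp[OF AE_lborel_singleton[of c]])

lemma AE_unif01_in: "AE y in unif01. y \<in> {0..1}"
  by (intro AE_uniform_measureI) auto

lemma emeasure_unif01_atLeast:
  assumes "0 \<le> a" "a \<le> 1"
  shows "emeasure unif01 {a..} = 1 - a"
proof -
  have "{a..} \<inter> {0..1} = {a..1::real}" using assms by auto
  then show ?thesis
    using assms by (simp add: divide_ennreal_def ennreal_minus)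
qed

section \<open>Order statistics and the distribution \<open>P\<^sup>U\<close>\<close>

lemma sorted_nth_le_iff_less_length_filter:
  fixes xs :: "'a::linorder list"
  assumes "sorted xs" "k < length xs"
  shows "xs ! k \<le> v \<longleftrightarrow> k < length (filter (\<lambda>y. y \<le> v) xs)"
  using assms
proof (induction xs arbitrary: k)
  case (Cons a xs)
  show ?case
  proof (cases "a \<le> v")
    case True
    then show ?thesis using Cons by (cases k) auto
  next
    case False
    then have above: "\<forall>y\<in>set (a # xs). \<not> y \<le> v" using Cons.prems(1) by auto
    then have "filter (\<lambda>y. y \<le> v) (a # xs) = []" by (simp only: filter_empty_conv)
    moreover have "\<not> (a # xs) ! k \<le> v" using above nth_mem[OF Cons.prems(2)] by blast
    ultimately show ?thesis by simp
  qed
qed simp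

lemma card_ge_iff_ord_stat_le:
  assumes "1 \<le> k" "k \<le> n"
  shows "k \<le> card {j. j < n \<and> U j \<le> v} \<longleftrightarrow> ord_stat n U k \<le> v"
proof -
  let ?s = "sort (map U [0..<n])"
  have "{i. i < n \<and> map U [0..<n] ! i \<le> v} = {j. j < n \<and> U j \<le> v}" by auto
  then have "card {j. j < n \<and> U j \<le> v} = length (filter (\<lambda>y. y \<le> v) (map U [0..<n]))"
    by (simp add: length_filter_conv_card)
  also have "\<dots> = length (filter (\<lambda>y. y \<le> v) ?s)"
    by (metis mset_filter mset_sort size_mset)
  moreover have "ord_stat n U k = ?s ! (k - 1)"
    using assms by (simp add: ord_stat_def)
  moreover have "k \<le> length (filter (\<lambda>y. y \<le> v) ?s) \<longleftrightarrow> k - 1 < length (filter (\<lambda>y. y \<le> v) ?s)"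
    using assms by arith
  ultimately show ?thesis
    using sorted_nth_le_iff_less_length_filter[of ?s "k - 1" v] assms by simp
qed

lemma ord_stat_1_le:
  assumes "j < n"
  shows "ord_stat n U 1 \<le> U j"
proof -
  have "j \<in> {i. i < n \<and> U i \<le> U j}" using assms by simp
  then have "1 \<le> card {i. i < n \<and> U i \<le> U j}"
    using card_gt_0_iff[of "{i. i < n \<and> U i \<le> U j}"] by fastforce
  then show ?thesis
    using card_ge_iff_ord_stat_le[of 1 n U "U j"] assms by simp
qed

lemma le_ord_stat_n:
  assumes "j < n"
  shows "U j \<le> ord_stat n U n"
proof (rule ccontr)
  assume "\<not> U j \<le> ord_stat n U n"
  then have "{i. i < n \<and> U i \<le> ord_stat n U n} \<subseteq> {..<n} - {j}" by auto
  then have "card {i. i < n \<and> U i \<le> ord_stat n U n} \<le> card ({..<n} - {j})"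
    by (rule card_mono[rotated]) simp
  also have "\<dots> < n" using assms by simp
  finally show False
    using card_ge_iff_ord_stat_le[of n n U "ord_stat n U n"] assms by simp
qed

lemma ord_stat_in_unit:
  assumes "\<forall>j<n. U j \<in> {0..1}"
  shows "ord_stat n U k \<in> {0..1}"
proof (cases "1 \<le> k \<and> k \<le> n")
  case True
  have "{j. j < n \<and> U j \<le> 1} = {..<n}" using assms by auto
  then have "ord_stat n U k \<le> 1"
    using card_ge_iff_ord_stat_le[of k n U 1] True by simp
  moreover have "0 \<le> ord_stat n U k"
  proof (rule ccontr)
    assume "\<not> 0 \<le> ord_stat n U k"
    have "k \<le> card {j. j < n \<and> U j \<le> ord_stat n U k}"
      using card_ge_iff_ord_stat_le[of k n U "ord_stat n U k"] True by simp
    then obtain j where "j < n" "U j \<le> ord_stat n U k"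
      using True by (cases "{j. j < n \<and> U j \<le> ord_stat n U k} = {}") auto
    then show False using assms \<open>\<not> 0 \<le> ord_stat n U k\<close> by force
  qed
  ultimately show ?thesis by simp
qed (auto simp: ord_stat_def)

definition sample_pval :: "nat \<Rightarrow> (nat \<Rightarrow> real) \<Rightarrow> real \<Rightarrow> real" where
  "sample_pval n U v = real (card {j. j < n \<and> U j \<le> v} + 1) / real (n + 1)"

lemma sets_card_ge:
  fixes n :: nat and U :: "nat \<Rightarrow> real"
  shows "{v. k \<le> card {j. j < n \<and> U j \<le> v}} \<in> sets borel"
proof -
  have "k \<le> card {j. j < n \<and> U j \<le> v} \<longleftrightarrow> real k \<le> (\<Sum>j<n. if U j \<le> v then 1 else 0)" for v
    using real_card_Collect_eq_sum[of n "\<lambda>j. U j \<le> v", symmetric] by simp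
  then have "{v. k \<le> card {j. j < n \<and> U j \<le> v}} = {v \<in> space borel. real k \<le> (\<Sum>j<n. if U j \<le> v then 1 else 0)}"
    by simp
  also have "\<dots> \<in> sets borel" by measurable
  finally show ?thesis .
qed

lemma emeasure_unif01_card_ge:
  assumes U: "\<forall>j<n. U j \<in> {0..1}" and "k \<le> n + 1"
  shows "emeasure unif01 {v. k \<le> card {j. j < n \<and> U j \<le> v}} = 1 - ord_stat n U k"
proof -
  have card_le: "card {j. j < n \<and> U j \<le> v} \<le> n" for v
    using card_mono[of "{..<n}" "{j. j < n \<and> U j \<le> v}"] by auto
  consider "k = 0" | "1 \<le> k" "k \<le> n" | "k = n + 1" using assms(2) by linarith
  then show ?thesis
  proof cases
    case 1
    then show ?thesis using prob_space.emeasure_space_1[OF prob_space_unif01]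
      by (simp add: ord_stat_def)
  next
    case 2
    then have "{v. k \<le> card {j. j < n \<and> U j \<le> v}} = {ord_stat n U k..}"
      using card_ge_iff_ord_stat_le by auto
    then show ?thesis
      using emeasure_unif01_atLeast ord_stat_in_unit[OF U, of k] by simp
  next
    case 3
    then have "{v. k \<le> card {j. j < n \<and> U j \<le> v}} = {}"
      using card_le by (auto simp: not_le le_imp_less_Suc)
    then show ?thesis using 3 by (simp add: ord_stat_def)
  qed
qed

lemma emeasure_unif01_card_eq:
  assumes U: "\<forall>j<n. U j \<in> {0..1}" and "k \<le> n"
  shows "emeasure unif01 {v. card {j. j < n \<and> U j \<le> v} = k} = ord_stat n U (k + 1) - ord_stat n U k"
proof -
  let ?T = "\<lambda>k. {v. k \<le> card {j. j < n \<and> U j \<le> v}}"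
  have "{v. card {j. j < n \<and> U j \<le> v} = k} = ?T k - ?T (k + 1)" by auto
  moreover have "emeasure unif01 (?T (k + 1)) \<noteq> \<top>"
    using emeasure_unif01_card_ge[OF U, of "k + 1"] assms by simp
  then have "emeasure unif01 (?T k - ?T (k + 1)) = emeasure unif01 (?T k) - emeasure unif01 (?T (k + 1))"
    using sets_card_ge by (intro emeasure_Diff) auto
  moreover have "0 \<le> 1 - ord_stat n U (k + 1)"
    using ord_stat_in_unit[OF U] by simp
  ultimately show ?thesis
    using assms emeasure_unif01_card_ge[OF U, of k] emeasure_unif01_card_ge[OF U, of "k + 1"]
    by (simp add: ennreal_minus)
qed

lemma sets_PU [simp, measurable_cong]: "sets (PU n U) = sets borel"
  unfolding PU_def using sets.sigma_sets_eq[of borel] by simp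

lemma space_PU [simp]: "space (PU n U) = UNIV"
  using sets_eq_imp_space_eq[OF sets_PU] by simp

lemma emeasure_PU:
  assumes "A \<in> sets borel"
  shows "emeasure (PU n U) A = (\<Sum>l\<in>{1..n+1}.
           ennreal (ord_stat n U l - ord_stat n U (l - 1)) * indicator A (real l / real (n + 1)))"
  unfolding PU_def
proof (rule emeasure_measure_of_sigma)
  let ?c = "\<lambda>l. ennreal (ord_stat n U l - ord_stat n U (l - 1))" and ?x = "\<lambda>l. real l / real (n + 1)"
  show "countably_additive (sets borel) (\<lambda>A. \<Sum>l\<in>{1..n+1}. ?c l * indicator A (?x l))"
    unfolding countably_additive_def
  proof (intro allI impI)
    fix F :: "nat \<Rightarrow> real set" assume "disjoint_family F"
    have "(\<Sum>i. \<Sum>l\<in>{1..n+1}. ?c l * indicator (F i) (?x l)) = (\<Sum>l\<in>{1..n+1}. \<Sum>i. ?c l * indicator (F i) (?x l))"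
      by (rule suminf_sum) simp
    also have "\<dots> = (\<Sum>l\<in>{1..n+1}. ?c l * indicator (\<Union>i. F i) (?x l))"
      using suminf_indicator[OF \<open>disjoint_family F\<close>] by simp
    finally show "(\<Sum>i. \<Sum>l\<in>{1..n+1}. ?c l * indicator (F i) (?x l)) = (\<Sum>l\<in>{1..n+1}. ?c l * indicator (\<Union>i. F i) (?x l))" .
  qed
qed (use assms sets.sigma_algebra_axioms[of borel] in \<open>auto simp: positive_def\<close>)

lemma measurable_sample_pval [measurable]: "sample_pval n U \<in> borel_measurable borel"
  unfolding sample_pval_def by (simp add: real_card_Collect_eq_sum)

lemma distr_sample_pval:
  assumes U: "\<forall>j<n. U j \<in> {0..1}"
  shows "distr unif01 borel (sample_pval n U) = PU n U"
proof (rule measure_eqI)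
  fix A assume "A \<in> sets (distr unif01 borel (sample_pval n U))"
  then have A: "A \<in> sets borel" by simp
  define cnt where "cnt v = card {j. j < n \<and> U j \<le> v}" for v
  define L where "L = {l \<in> {1..n+1}. real l / real (n + 1) \<in> A}"
  have cnt_le: "cnt v \<le> n" for v
    using card_mono[of "{..<n}" "{j. j < n \<and> U j \<le> v}"] by (auto simp: cnt_def)
  have cnt_sets: "{v. cnt v = k} \<in> sets borel" for k
  proof -
    have "{v. cnt v = k} = {v. k \<le> cnt v} - {v. k + 1 \<le> cnt v}" by auto
    then show ?thesis using sets_card_ge by (simp add: cnt_def)
  qed
  have "sample_pval n U -` A \<inter> space unif01 = (\<Union>l\<in>L. {v. cnt v = l - 1})"
    using cnt_le by (force simp: sample_pval_def L_def cnt_def[symmetric])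
  then have "emeasure (distr unif01 borel (sample_pval n U)) A = emeasure unif01 (\<Union>l\<in>L. {v. cnt v = l - 1})"
    using A by (simp add: emeasure_distr)
  also have "\<dots> = (\<Sum>l\<in>L. emeasure unif01 {v. cnt v = l - 1})"
    using cnt_sets by (intro sum_emeasure[symmetric]) (auto simp: disjoint_family_on_def L_def)
  also have "\<dots> = (\<Sum>l\<in>L. ennreal (ord_stat n U l - ord_stat n U (l - 1)))"
    using emeasure_unif01_card_eq[OF U] by (intro sum.cong) (auto simp: L_def cnt_def)
  also have "\<dots> = (\<Sum>l\<in>{1..n+1}. if real l / real (n + 1) \<in> A then ennreal (ord_stat n U l - ord_stat n U (l - 1)) else 0)"
    unfolding L_def by (rule sum.inter_filter) simp
  also have "\<dots> = (\<Sum>l\<in>{1..n+1}. ennreal (ord_stat n U l - ord_stat n U (l - 1)) * indicator A (real l / real (n + 1)))"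
    by (intro sum.cong refl) (simp add: indicator_def)
  also have "\<dots> = emeasure (PU n U) A"
    using emeasure_PU[OF A] by simp
  finally show "emeasure (distr unif01 borel (sample_pval n U)) A = emeasure (PU n U) A" .
qed simp

lemma emeasure_PU_UNIV_finite: "emeasure (PU n U) UNIV \<noteq> \<top>"
  by (simp add: emeasure_PU ennreal_mult_eq_top_iff)

lemma sum_ord_stat_gaps:
  assumes "a \<le> Suc b"
  shows "(\<Sum>l = Suc a..Suc b. ord_stat n U l - ord_stat n U (l - 1)) = ord_stat n U (Suc b) - ord_stat n U a"
proof -
  have "(\<Sum>l = Suc a..Suc b. ord_stat n U l - ord_stat n U (l - 1)) = (\<Sum>i = a..b. ord_stat n U (Suc i) - ord_stat n U i)"
    by (simp add: sum.shift_bounds_cl_Suc_ivl del: sum.cl_ivl_Suc)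
  also have "\<dots> = ord_stat n U (Suc b) - ord_stat n U a"
    using assms by (rule sum_Suc_diff)
  finally show ?thesis .
qed

lemma emeasure_PU_UNIV:
  "emeasure (PU n U) UNIV = ennreal (\<Sum>l\<in>{1..n+1}. max 0 (ord_stat n U l - ord_stat n U (l - 1)))"
proof -
  have "emeasure (PU n U) UNIV = (\<Sum>l\<in>{1..n+1}. ennreal (max 0 (ord_stat n U l - ord_stat n U (l - 1))))"
    by (simp add: emeasure_PU ennreal_max_0)
  also have "\<dots> = ennreal (\<Sum>l\<in>{1..n+1}. max 0 (ord_stat n U l - ord_stat n U (l - 1)))"
    by (rule sum_ennreal) simp
  finally show ?thesis .
qed

(* The gaps U_(l) - U_(l-1) may be negative when U is not in [0,1]^n; ennreal truncates them to 0,
   and the remaining total mass of PU n U then exceeds 1. *)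
lemma emeasure_PU_UNIV_gt_1:
  assumes "\<not> (\<forall>j<n. U j \<in> {0..1})"
  shows "1 < emeasure (PU n U) UNIV"
proof -
  define d where "d l = ord_stat n U l - ord_stat n U (l - 1)" for l
  have lower: "ord_stat n U (Suc b) - ord_stat n U a \<le> (\<Sum>l\<in>{1..n+1}. max 0 (d l))"
    if "a \<le> Suc b" "b \<le> n" for a b
  proof -
    have "ord_stat n U (Suc b) - ord_stat n U a = (\<Sum>l = Suc a..Suc b. d l)"
      using sum_ord_stat_gaps[OF that(1)] by (simp add: d_def)
    also have "\<dots> \<le> (\<Sum>l = Suc a..Suc b. max 0 (d l))" by (intro sum_mono) simp
    also have "\<dots> \<le> (\<Sum>l\<in>{1..n+1}. max 0 (d l))" using that by (intro sum_mono2) auto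
    finally show ?thesis .
  qed
  obtain j where j: "j < n" "U j < 0 \<or> 1 < U j" using assms by force
  from j(2) have "1 < (\<Sum>l\<in>{1..n+1}. max 0 (d l))"
  proof
    assume "U j < 0"
    then have "1 < ord_stat n U (Suc n) - ord_stat n U 1"
      using ord_stat_1_le[OF j(1), of U] by (simp add: ord_stat_def)
    then show ?thesis using lower[of 1 n] by simp
  next
    assume "1 < U j"
    then have "1 < ord_stat n U (Suc (n - 1)) - ord_stat n U 0"
      using le_ord_stat_n[OF j(1), of U] j(1) by (simp add: ord_stat_def)
    then show ?thesis using lower[of 0 "n - 1"] j(1) by simp
  qed
  then show ?thesis by (simp add: emeasure_PU_UNIV d_def)
qed

lemma not_subprob_space_PiM_PU:
  assumes "\<not> (\<forall>j<n. U j \<in> {0..1})" "1 \<le> m"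
  shows "\<not> subprob_space (PiM {..<m} (\<lambda>_::nat. PU n U))"
proof
  assume "subprob_space (PiM {..<m} (\<lambda>_::nat. PU n U))"
  then have "emeasure (PiM {..<m} (\<lambda>_::nat. PU n U)) (PiE {..<m} (\<lambda>_. UNIV)) \<le> 1"
    using subprob_space.emeasure_space_le_1 by (fastforce simp: space_PiM)
  moreover interpret finite_measure "PU n U"
    using emeasure_PU_UNIV_finite by (intro finite_measureI) simp
  interpret product_sigma_finite "\<lambda>_::nat. PU n U"
    by (simp add: product_sigma_finite_def sigma_finite_measure_axioms)
  have "emeasure (PiM {..<m} (\<lambda>_::nat. PU n U)) (PiE {..<m} (\<lambda>_. UNIV)) = emeasure (PU n U) UNIV ^ m"
    by (subst emeasure_PiM) auto
  moreover have "1 < emeasure (PU n U) UNIV ^ m"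
    using emeasure_PU_UNIV_gt_1[OF assms(1)] assms(2) by (intro one_less_power) auto
  ultimately show False by simp
qed

section \<open>Kernels\<close>

lemma distr_pair_measure_eq_bind:
  assumes "prob_space M1" "prob_space M2"
    and f: "(\<lambda>(x, y). f x y) \<in> measurable (M1 \<Otimes>\<^sub>M M2) K"
  shows "distr (M1 \<Otimes>\<^sub>M M2) K (\<lambda>(x, y). f x y) = M1 \<bind> (\<lambda>x. distr M2 K (f x))"
proof (rule measure_eqI)
  interpret pair_prob_space M1 M2
    using assms by (simp add: pair_prob_space_def pair_sigma_finite_def prob_space_imp_sigma_finite)
  have kernel: "(\<lambda>x. distr M2 K (f x)) \<in> measurable M1 (subprob_algebra K)"
    by (rule measurable_distr2[OF f]) (rule measurable_const, rule M2.M_in_subprob)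
  show "sets (distr (M1 \<Otimes>\<^sub>M M2) K (\<lambda>(x, y). f x y)) = sets (M1 \<bind> (\<lambda>x. distr M2 K (f x)))"
    using M1.not_empty by (subst sets_bind[where N=K]) auto
  fix A assume "A \<in> sets (distr (M1 \<Otimes>\<^sub>M M2) K (\<lambda>(x, y). f x y))"
  then have A: "A \<in> sets K" by simp
  have "emeasure (distr (M1 \<Otimes>\<^sub>M M2) K (\<lambda>(x, y). f x y)) A
      = emeasure (M1 \<Otimes>\<^sub>M M2) ((\<lambda>(x, y). f x y) -` A \<inter> space (M1 \<Otimes>\<^sub>M M2))"
    by (rule emeasure_distr[OF f A])
  also have "\<dots> = (\<integral>\<^sup>+x. emeasure M2 (Pair x -` ((\<lambda>(x, y). f x y) -` A \<inter> space (M1 \<Otimes>\<^sub>M M2))) \<partial>M1)"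
    by (rule M2.emeasure_pair_measure_alt) (rule measurable_sets[OF f A])
  also have "\<dots> = (\<integral>\<^sup>+x. emeasure (distr M2 K (f x)) A \<partial>M1)"
  proof (rule nn_integral_cong)
    fix x assume x: "x \<in> space M1"
    have "Pair x -` ((\<lambda>(x, y). f x y) -` A \<inter> space (M1 \<Otimes>\<^sub>M M2)) = f x -` A \<inter> space M2"
      using x by (auto simp: space_pair_measure)
    with measurable_Pair2[OF f x] A
    show "emeasure M2 (Pair x -` ((\<lambda>(x, y). f x y) -` A \<inter> space (M1 \<Otimes>\<^sub>M M2))) = emeasure (distr M2 K (f x)) A"
      by (simp add: emeasure_distr)
  qed
  also have "\<dots> = emeasure (M1 \<bind> (\<lambda>x. distr M2 K (f x))) A"
    by (rule emeasure_bind[OF M1.not_empty kernel A, symmetric])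
  finally show "emeasure (distr (M1 \<Otimes>\<^sub>M M2) K (\<lambda>(x, y). f x y)) A = emeasure (M1 \<bind> (\<lambda>x. distr M2 K (f x))) A" .
qed

(* The kernel f need not be measurable: bind sees f only through the preimages of measurable
   sets of subprobability measures, and off G the values of f are not subprobability measures. *)
lemma bind_cong_AE_off_subprob:
  assumes g: "g \<in> measurable M (subprob_algebra N)"
    and sets_f: "\<And>x. x \<in> space M \<Longrightarrow> sets (f x) = sets N"
    and G: "G \<in> sets M" "AE x in M. x \<in> G"
    and eq: "\<And>x. x \<in> G \<Longrightarrow> f x = g x"
    and not_subprob: "\<And>x. x \<in> space M \<Longrightarrow> x \<notin> G \<Longrightarrow> \<not> subprob_space (f x)"
  shows "M \<bind> f = M \<bind> g"
proof (cases "space M = {}")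
  case False
  let ?SA = "subprob_algebra N"
  have preimage: "f -` a \<inter> space M = g -` a \<inter> space M \<inter> G" if "a \<in> sets ?SA" for a
  proof (intro set_eqI iffI)
    fix x assume x: "x \<in> f -` a \<inter> space M"
    then have "subprob_space (f x)"
      using sets.sets_into_space[OF that] by (auto simp: space_subprob_algebra)
    then have "x \<in> G" using not_subprob x by blast
    then show "x \<in> g -` a \<inter> space M \<inter> G" using x eq by auto
  qed (use eq in auto)
  have same_measure: "emeasure M (f -` a \<inter> space M) = emeasure M (g -` a \<inter> space M)"
    if "a \<in> sets ?SA" for a
    unfolding preimage[OF that]
  proof (rule emeasure_eq_AE)
    show "AE x in M. x \<in> g -` a \<inter> space M \<inter> G \<longleftrightarrow> x \<in> g -` a \<inter> space M"
      using G(2) by eventually_elim auto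
  qed (use G(1) measurable_sets[OF g that] in auto)
  have "distr M ?SA f = distr M ?SA g"
    unfolding distr_def[of M ?SA f] distr_def[of M ?SA g]
    by (rule measure_of_eq[OF sets.space_closed]) (simp add: same_measure sets.sigma_sets_eq)
  moreover have "subprob_algebra (f x) = ?SA" "subprob_algebra (g x) = ?SA" if "x \<in> space M" for x
    using subprob_algebra_cong[OF sets_f[OF that]] subprob_algebra_cong[OF sets_kernel[OF g that]]
    by simp_all
  ultimately show ?thesis
    using False by (simp add: bind_nonempty some_in_eq)
qed (simp add: bind_empty)

section \<open>The i.i.d. uniform model\<close>

lemma conf_pvals_neg_merge:
  "(\<lambda>x. \<lambda>i\<in>{..<m}. conf_pval n (\<lambda>k. - x k) i) \<circ> merge {..<n} {n..<n + m}
     = (\<lambda>(U, W). \<lambda>i\<in>{..<m}. sample_pval n U (W (n + i)))"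
proof -
  have "{j. j < n \<and> - merge {..<n} {n..<n + m} (U, W) (n + i) \<le> - merge {..<n} {n..<n + m} (U, W) j}
      = {j. j < n \<and> U j \<le> W (n + i)}" if "i < m" for U W :: "nat \<Rightarrow> real" and i
    using that by (auto simp: merge_def)
  then show ?thesis
    by (auto simp: fun_eq_iff conf_pval_def sample_pval_def add.commute)
qed

lemma measurable_merge_unif01:
  fixes n m :: nat
  shows "merge {..<n} {n..<n + m}
     \<in> measurable (PiM {..<n} (\<lambda>_. unif01) \<Otimes>\<^sub>M PiM {n..<n + m} (\<lambda>_. unif01)) (PiM {..<n + m} (\<lambda>_. unif01))"
proof -
  have "{..<n} \<union> {n..<n + m} = {..<n + m}" by auto
  with measurable_merge[of "{..<n}" "{n..<n + m}" "\<lambda>_. unif01"] show ?thesis by simp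
qed

lemma measurable_uniform_conf_pvals:
  "(\<lambda>x. \<lambda>i\<in>{..<m}. conf_pval n (\<lambda>k. - x k) i)
     \<in> measurable (PiM {..<n + m} (\<lambda>_. unif01)) (PiM {..<m} (\<lambda>_. borel))"
  by (rule measurable_conf_pvals) measurable

lemma distr_sample_pvals:
  assumes U: "\<forall>j<n. U j \<in> {0..1}"
  shows "distr (PiM {n..<n + m} (\<lambda>_. unif01)) (PiM {..<m} (\<lambda>_. borel))
           (\<lambda>W. \<lambda>i\<in>{..<m}. sample_pval n U (W (n + i)))
       = PiM {..<m} (\<lambda>_. PU n U)"
proof -
  let ?J = "PiM {n..<n + m} (\<lambda>_. unif01)" and ?W = "PiM {..<m} (\<lambda>_. unif01)"
    and ?K = "PiM {..<m} (\<lambda>_. borel :: real measure)"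
  define shift where "shift W = (\<lambda>i\<in>{..<m}. W (n + i))" for W :: "nat \<Rightarrow> real"
  let ?p = "compose {..<m} (sample_pval n U)"
  have shift: "shift \<in> measurable ?J ?W"
    unfolding shift_def by (auto intro!: measurable_restrict measurable_component_singleton)
  have p: "?p \<in> measurable ?W ?K"
    unfolding compose_def by measurable
  have PU: "distr unif01 (PU n U) (sample_pval n U) = PU n U"
    using distr_cong[of unif01 unif01 "PU n U" borel] distr_sample_pval[OF U] by simp
  then have "prob_space (PU n U)"
    using prob_space.prob_space_distr[OF prob_space_unif01, of "sample_pval n U" "PU n U"] by simp
  have "distr ?J ?K (\<lambda>W. \<lambda>i\<in>{..<m}. sample_pval n U (W (n + i))) = distr ?J ?K (?p \<circ> shift)"
    by (intro distr_cong) (auto simp: compose_def shift_def)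
  also have "\<dots> = distr (distr ?J ?W shift) ?K ?p"
    by (rule distr_distr[OF p shift, symmetric])
  also have "distr ?J ?W shift = ?W"
    unfolding shift_def using prob_space_unif01
    by (intro distr_PiM_reindex) (auto simp: inj_on_def)
  also have "distr ?W ?K ?p = distr ?W (PiM {..<m} (\<lambda>_. PU n U)) ?p"
    by (intro distr_cong sets_PiM_cong) simp_all
  also have "\<dots> = PiM {..<m} (\<lambda>_. distr unif01 (PU n U) (sample_pval n U))"
    using prob_space_unif01 \<open>prob_space (PU n U)\<close> by (intro distr_PiM_finite_prob_space') auto
  finally show ?thesis
    unfolding PU .
qed

lemma measurable_sample_pvals:
  "(\<lambda>(U, W). \<lambda>i\<in>{..<m}. sample_pval n U (W (n + i)))
     \<in> measurable (PiM {..<n} (\<lambda>_. unif01) \<Otimes>\<^sub>M PiM {n..<n + m} (\<lambda>_. unif01)) (PiM {..<m} (\<lambda>_. borel))"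
  unfolding conf_pvals_neg_merge[symmetric]
  using measurable_merge_unif01 measurable_uniform_conf_pvals by (rule measurable_comp)

lemma P_nm_eq_bind_sample_pvals:
  assumes "1 \<le> m"
  shows "P_nm n m = PiM {..<n} (\<lambda>_. unif01) \<bind>
           (\<lambda>U. distr (PiM {n..<n + m} (\<lambda>_. unif01)) (PiM {..<m} (\<lambda>_. borel))
                  (\<lambda>W. \<lambda>i\<in>{..<m}. sample_pval n U (W (n + i))))"
  unfolding P_nm_def
proof (rule bind_cong_AE_off_subprob)
  let ?G = "PiE {..<n} (\<lambda>_. {0..1::real})"
  show "(\<lambda>U. distr (PiM {n..<n + m} (\<lambda>_. unif01)) (PiM {..<m} (\<lambda>_. borel))
                  (\<lambda>W. \<lambda>i\<in>{..<m}. sample_pval n U (W (n + i))))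
        \<in> measurable (PiM {..<n} (\<lambda>_. unif01)) (subprob_algebra (PiM {..<m} (\<lambda>_. borel)))"
    using measurable_sample_pvals prob_space_PiM[OF prob_space_unif01]
    by (intro measurable_distr2[where M="PiM {n..<n + m} (\<lambda>_. unif01)"] measurable_const
        prob_space.M_in_subprob) auto
  show "?G \<in> sets (PiM {..<n} (\<lambda>_. unif01))"
    by (rule sets_PiM_I_finite) auto
  have "AE U in PiM {..<n} (\<lambda>_. unif01). \<forall>j\<in>{..<n}. U j \<in> {0..1}"
    using AE_unif01_in by (intro AE_finite_allI) (auto intro: AE_PiM_component prob_space_unif01)
  with AE_space show "AE U in PiM {..<n} (\<lambda>_. unif01). U \<in> ?G"
    by eventually_elim (auto simp: space_PiM PiE_iff)
  show "PiM {..<m} (\<lambda>_. PU n U) = distr (PiM {n..<n + m} (\<lambda>_. unif01)) (PiM {..<m} (\<lambda>_. borel))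
                  (\<lambda>W. \<lambda>i\<in>{..<m}. sample_pval n U (W (n + i)))" if "U \<in> ?G" for U
    using distr_sample_pvals[of n U m] that by (simp add: PiE_iff)
  show "\<not> subprob_space (PiM {..<m} (\<lambda>_. PU n U))"
    if "U \<in> space (PiM {..<n} (\<lambda>_. unif01))" "U \<notin> ?G" for U
    using that not_subprob_space_PiM_PU[OF _ assms] by (auto simp: space_PiM PiE_iff)
qed (rule sets_PiM_cong; simp)

lemma distr_uniform_conf_pvals:
  assumes "1 \<le> m"
  shows "distr (PiM {..<n + m} (\<lambda>_. unif01)) (PiM {..<m} (\<lambda>_. borel))
           (\<lambda>x. \<lambda>i\<in>{..<m}. conf_pval n (\<lambda>k. - x k) i) = P_nm n m"
proof -
  let ?U = "\<lambda>I. PiM I (\<lambda>_::nat. unif01)" and ?K = "PiM {..<m} (\<lambda>_::nat. borel :: real measure)"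
  interpret product_sigma_finite "\<lambda>_::nat. unif01"
    by (simp add: product_sigma_finite_def prob_space_imp_sigma_finite prob_space_unif01)
  have "{..<n} \<union> {n..<n + m} = {..<n + m}" by auto
  then have merge: "distr (?U {..<n} \<Otimes>\<^sub>M ?U {n..<n + m}) (?U {..<n + m}) (merge {..<n} {n..<n + m}) = ?U {..<n + m}"
    using distr_merge[of "{..<n}" "{n..<n + m}"] by (simp add: disjoint_iff)
  have "distr (?U {..<n + m}) ?K (\<lambda>x. \<lambda>i\<in>{..<m}. conf_pval n (\<lambda>k. - x k) i)
      = distr (?U {..<n} \<Otimes>\<^sub>M ?U {n..<n + m}) ?K (\<lambda>(U, W). \<lambda>i\<in>{..<m}. sample_pval n U (W (n + i)))"
    using distr_distr[OF measurable_uniform_conf_pvals[where n=n and m=m] measurable_merge_unif01[where n=n and m=m]]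
    unfolding merge conf_pvals_neg_merge .
  also have "\<dots> = ?U {..<n} \<bind> (\<lambda>U. distr (?U {n..<n + m}) ?K (\<lambda>W. \<lambda>i\<in>{..<m}. sample_pval n U (W (n + i))))"
    using prob_space_PiM[OF prob_space_unif01] prob_space_PiM[OF prob_space_unif01] measurable_sample_pvals
    by (rule distr_pair_measure_eq_bind)
  also have "\<dots> = P_nm n m"
    using assms by (rule P_nm_eq_bind_sample_pvals[symmetric])
  finally show ?thesis .
qed

theorem proposition2:
  fixes M :: "'w measure" and S :: "nat \<Rightarrow> 'w \<Rightarrow> real" and n m :: nat
  assumes "prob_space M"
    and "n \<ge> 1" and "m \<ge> 1"
    and meas: "\<And>i. i < n + m \<Longrightarrow> S i \<in> borel_measurable M"
    and exch: "\<And>\<sigma>. \<sigma> permutes {..<n + m} \<Longrightarrow>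
        distr M (PiM {..<n + m} (\<lambda>_. borel)) (\<lambda>\<omega>. \<lambda>i\<in>{..<n + m}. S (\<sigma> i) \<omega>)
      = distr M (PiM {..<n + m} (\<lambda>_. borel)) (\<lambda>\<omega>. \<lambda>i\<in>{..<n + m}. S i \<omega>)"
    and no_ties: "AE \<omega> in M. \<forall>i<n + m. \<forall>j<n + m. i \<noteq> j \<longrightarrow> S i \<omega> \<noteq> S j \<omega>"
  shows "distr M (PiM {..<m} (\<lambda>_. borel))
           (\<lambda>\<omega>. \<lambda>i\<in>{..<m}. conf_pval n (\<lambda>k. S k \<omega>) i) = P_nm n m"
proof -
  let ?X = "PiM {..<n + m} (\<lambda>_::nat. unif01)"
  (* Negating the scores makes each p-value count the calibration points below the test point,
     the order in which PU places its atoms. *)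
  have "exchangeable M (n + m) S"
    using exch by (simp add: exchangeable_def)
  moreover have "AE \<omega> in M. inj_on (\<lambda>i. S i \<omega>) {..<n + m}"
    using no_ties by eventually_elim (auto simp: inj_on_def)
  moreover have "exchangeable ?X (n + m) (\<lambda>k x. - x k)"
    by (rule exchangeable_PiM_iid[OF prob_space_unif01]) simp
  moreover have "AE x in ?X. inj_on (\<lambda>k. - x k) {..<n + m}"
  proof -
    have "AE x in ?X. inj_on x {..<n + m}"
      using prob_space_unif01 AE_unif01_neq by (intro AE_PiM_inj_on) auto
    then show ?thesis by eventually_elim (auto simp: inj_on_def)
  qed
  ultimately have "distr M (PiM {..<m} (\<lambda>_. borel)) (\<lambda>\<omega>. \<lambda>i\<in>{..<m}. conf_pval n (\<lambda>k. S k \<omega>) i)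
      = distr ?X (PiM {..<m} (\<lambda>_. borel)) (\<lambda>x. \<lambda>i\<in>{..<m}. conf_pval n (\<lambda>k. - x k) i)"
    using \<open>prob_space M\<close> meas prob_space_PiM[OF prob_space_unif01]
    by (intro distr_conf_pvals_eq) auto
  also have "\<dots> = P_nm n m"
    using \<open>m \<ge> 1\<close> by (rule distr_uniform_conf_pvals)
  finally show ?thesis .
qed

end
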